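(* Let $\vec{\alpha}=\langle \alpha_s : s\in[\mathbb{N}]^{<\infty}\rangle$ be a sequence of nonstandard hypernatural numbers. For every $\mathcal{X}\subseteq[\mathbb{N}]^{\infty}$ and every $\vec{\alpha}$-tree $T$ there exists an $\vec{\alpha}$-tree $S\subseteq T$ with $st(S)=st(T)$ such that one of the following holds: (1) $[S]\subseteq\mathcal{X}$; (2) $[S]\cap\mathcal{X}=\emptyset$; (3) for every $\vec{\alpha}$-tree $S'$ with $S'\subseteq S$, both $[S']\not\subseteq\mathcal{X}$ and $[S']\cap\mathcal{X}\neq\emptyset$.
   Context: Setting (Alpha-Theory of Benci–Di Nasso): one works in ZFC together with a new symbol $\alpha$ satisfying: ($\alpha$1) every sequence $\varphi=\langle\varphi_i:i\in\mathbb{N}\rangle$ has a unique "ideal value" $\varphi[\alpha]$; ($\alpha$2) if $\varphi[\alpha]=\psi[\alpha]$ and $f$ is a function such that $f\circ\varphi$ and $f\circ\psi$ make sense, then $(f\circ\varphi)[\alpha]=(f\circ\psi)[\alpha]$; ($\alpha$3) for $r\in\mathbb{R}$ the constant sequence with value $r$ has ideal value $r$, and the sequence $\psi_i=i$ has ideal value $\alpha\notin\mathbb{N}$; ($\alpha$4) if $\vartheta_i=\{\varphi_i,\psi_i\}$ for all $i$ then $\vartheta[\alpha]=\{\varphi[\alpha],\psi[\alpha]\}$; ($\alpha$5) the constant sequence $\emptyset$ has ideal value $\emptyset$, and if every $\psi_i$ is a nonempty set then $\psi[\alpha]=\{\vartheta[\alpha]:\vartheta_i\in\psi_i\text{ for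 all }i\}$. For a set $A$, ${}^*A$ denotes the ideal value of the constant sequence with value $A$; relations and operations are transformed the same way and the $*$ is dropped on them (e.g. $<$, $\cup$). ${}^*\mathbb{N}$ is the set of hypernatural numbers; elements of ${}^*\mathbb{N}\setminus\mathbb{N}$ are nonstandard hypernatural numbers. Notation: $[X]^{<\infty}$, $[X]^{\infty}$ are the finite, resp. infinite, subsets of $X\subseteq\mathbb{N}$. For finite $s$ and $X\subseteq\mathbb{N}$, $s\sqsubseteq X$ means $s=\{j\in X:j\le i\}$ for some $i\in\mathbb{N}$. A tree on $\mathbb{N}$ is a nonempty $T\subseteq[\mathbb{N}]^{<\infty}$ such that $s\sqsubseteq t\in T$ implies $s\in T$. $[T]=\{X\in[\mathbb{N}]^\infty:$ every finite $s\sqsubseteq X$ lies in $T\}$. The stem $st(T)$ of $T$, if it exists, is the $\sqsubseteq$-maximal $s\in T$ which is $\sqsubseteq$-comparable with every element of $T$; $T/s=\{t\in T:s\sqsubseteq t\}$. An $\vec{\alpha}$-tree is a tree $T$ on $\mathbb{N}$ with a stem $st(T)$ such that $T/st(T)\neq\emptyset$ and for all $s\in T/st(T)$, $s\cup\{\alpha_s\}\in{}^*T$. *)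

theory Defs
  imports Main
begin

text \<open>Alpha-Theory is modelled by an ultrapower of the sequences over a
nonprincipal ultrafilter U on the natural numbers, namely
U = the family of A with alpha in *A.  The ideal value of a sequence phi is its
U-class.  A hypernatural number is the ideal value of a sequence nat to nat.\<close>

definition free_ultrafilter :: "nat set set \<Rightarrow> bool" where
  "free_ultrafilter U \<longleftrightarrow>
     UNIV \<in> U \<and> {} \<notin> U \<and>
     (\<forall>A B. A \<in> U \<and> B \<in> U \<longrightarrow> A \<inter> B \<in> U) \<and>
     (\<forall>A B. A \<in> U \<and> A \<subseteq> B \<longrightarrow> B \<in> U) \<and>
     (\<forall>A. A \<in> U \<or> - A \<in> U) \<and>
     (\<forall>A. finite A \<longrightarrow> A \<notin> U)"

definition nonstandard :: "nat set set \<Rightarrow> (nat \<Rightarrow> nat) \<Rightarrow> bool" where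
  "nonstandard U f \<longleftrightarrow> (\<forall>n. {i. f i \<noteq> n} \<in> U)"

text \<open>s together with the hypernatural (class of f) belongs to *T.\<close>
definition ext_in_star :: "nat set set \<Rightarrow> nat set \<Rightarrow> (nat \<Rightarrow> nat) \<Rightarrow> nat set set \<Rightarrow> bool" where
  "ext_in_star U s f T \<longleftrightarrow> {i. insert (f i) s \<in> T} \<in> U"

definition init_seg :: "nat set \<Rightarrow> nat set \<Rightarrow> bool" (infix "\<sqsubseteq>" 50) where
  "s \<sqsubseteq> X \<longleftrightarrow> finite s \<and> s \<subseteq> X \<and> (\<forall>j\<in>X. \<forall>k\<in>s. j \<le> k \<longrightarrow> j \<in> s)"

definition is_tree :: "nat set set \<Rightarrow> bool" where
  "is_tree T \<longleftrightarrow> T \<noteq> {} \<and> (\<forall>t\<in>T. finite t) \<and> (\<forall>s t. s \<sqsubseteq> t \<and> t \<in> T \<longrightarrow> s \<in> T)"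

definition body :: "nat set set \<Rightarrow> nat set set" where
  "body T = {X. infinite X \<and> (\<forall>s. s \<sqsubseteq> X \<longrightarrow> s \<in> T)}"

definition comparable_all :: "nat set set \<Rightarrow> nat set \<Rightarrow> bool" where
  "comparable_all T s \<longleftrightarrow> (\<forall>t\<in>T. s \<sqsubseteq> t \<or> t \<sqsubseteq> s)"

definition is_stem :: "nat set set \<Rightarrow> nat set \<Rightarrow> bool" where
  "is_stem T s \<longleftrightarrow> s \<in> T \<and> comparable_all T s \<and>
     (\<forall>s'\<in>T. comparable_all T s' \<and> s \<sqsubseteq> s' \<longrightarrow> s' = s)"

definition stem :: "nat set set \<Rightarrow> nat set" where
  "stem T = (THE s. is_stem T s)"

definition restr :: "nat set set \<Rightarrow> nat set \<Rightarrow> nat set set" where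
  "restr T s = {t\<in>T. s \<sqsubseteq> t}"

text \<open>alpha-tree, for the vector alpha_s given by representing sequences a s.\<close>
definition alpha_tree :: "nat set set \<Rightarrow> (nat set \<Rightarrow> nat \<Rightarrow> nat) \<Rightarrow> nat set set \<Rightarrow> bool" where
  "alpha_tree U a T \<longleftrightarrow> is_tree T \<and> (\<exists>s. is_stem T s) \<and> restr T (stem T) \<noteq> {} \<and>
     (\<forall>s\<in>restr T (stem T). ext_in_star U s (a s) T)"

end

theory Submission
  imports Defs
begin

text \<open>Call a node s of T decided if T has an alpha-subtree with stem s whose body lies
entirely in \<X> or entirely in its complement. Gluing witnessing subtrees shows that a node is
decided as soon as U-almost all of its alpha-successors are decided the same way. Hence, if the
stem of T is undecided, U-almost all successors of every undecided node are undecided, and pruning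
T to the nodes all of whose extensions of the stem are undecided yields an alpha-tree S. Every
alpha-subtree of S has its stem above that of T, so its stem is undecided, which is alternative (3).\<close>

lemma init_seg_refl: "finite s \<Longrightarrow> s \<sqsubseteq> s"
  by (auto simp: init_seg_def)

lemma init_seg_finite: "s \<sqsubseteq> X \<Longrightarrow> finite s"
  by (auto simp: init_seg_def)

lemma init_seg_subset: "s \<sqsubseteq> X \<Longrightarrow> s \<subseteq> X"
  by (auto simp: init_seg_def)

lemma init_seg_trans: "s \<sqsubseteq> t \<Longrightarrow> t \<sqsubseteq> X \<Longrightarrow> s \<sqsubseteq> X"
  unfolding init_seg_def by blast

lemma init_seg_antisym: "s \<sqsubseteq> t \<Longrightarrow> t \<sqsubseteq> s \<Longrightarrow> s = t"
  unfolding init_seg_def by blast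

lemma init_seg_linear:
  assumes "u \<sqsubseteq> X" "v \<sqsubseteq> X"
  shows "u \<sqsubseteq> v \<or> v \<sqsubseteq> u"
proof -
  have "u \<subseteq> v \<or> v \<subseteq> u"
  proof (rule ccontr)
    assume "\<not> (u \<subseteq> v \<or> v \<subseteq> u)"
    then obtain x y where xy: "x \<in> u" "x \<notin> v" "y \<in> v" "y \<notin> u" by blast
    show False
    proof (cases "x \<le> y")
      case True
      with assms xy show False unfolding init_seg_def by blast
    next
      case False
      then have "y \<le> x" by simp
      with assms xy show False unfolding init_seg_def by blast
    qed
  qed
  with assms show ?thesis
    unfolding init_seg_def by blast
qed

lemma init_seg_insert: "finite s \<Longrightarrow> \<forall>k\<in>s. k < n \<Longrightarrow> s \<sqsubseteq> insert n s"
  unfolding init_seg_def by auto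

lemma init_seg_insertE:
  assumes "u \<sqsubseteq> insert n s" "finite s" "\<forall>k\<in>s. k < n"
  shows "u \<sqsubseteq> s \<or> u = insert n s"
proof (cases "n \<in> u")
  case True
  have "insert n s \<subseteq> u"
  proof
    fix x assume "x \<in> insert n s"
    with True assms show "x \<in> u"
      unfolding init_seg_def by (metis insertE less_imp_le)
  qed
  with assms(1) show ?thesis
    unfolding init_seg_def by auto
next
  case False
  with assms show ?thesis
    unfolding init_seg_def by auto
qed

lemma init_seg_insert_unique:
  assumes "finite s" "\<forall>k\<in>s. k < n" "\<forall>k\<in>s. k < m"
    and "insert n s \<sqsubseteq> X" "insert m s \<sqsubseteq> X"
  shows "n = m"
proof -
  have "insert n s \<sqsubseteq> insert m s \<or> insert m s \<sqsubseteq> insert n s"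
    using init_seg_linear assms(4,5) by blast
  then have "insert n s = insert m s"
    using init_seg_insertE assms(1-3) by (metis insertI1 less_irrefl init_seg_subset subsetD)
  with assms(2,3) show ?thesis
    by (metis insertE insertI1 less_irrefl)
qed

lemma infinite_init_seg_not_init_seg:
  assumes "infinite X" "finite t"
  obtains v where "v \<sqsubseteq> X" "\<not> v \<sqsubseteq> t"
proof -
  have "X - t \<noteq> {}"
    using assms by (metis Diff_eq_empty_iff finite_subset)
  then obtain x where x: "x \<in> X" "x \<notin> t" by blast
  define v where "v = {j\<in>X. j \<le> x}"
  have "finite v"
    unfolding v_def by (rule finite_subset[of _ "{..x}"]) auto
  then have "v \<sqsubseteq> X"
    unfolding v_def init_seg_def by auto
  moreover have "\<not> v \<sqsubseteq> t"
    using x init_seg_subset unfolding v_def by blast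
  ultimately show thesis ..
qed

lemma free_ultrafilter_UNIV: "free_ultrafilter U \<Longrightarrow> UNIV \<in> U"
  unfolding free_ultrafilter_def by (elim conjE)

lemma free_ultrafilter_mono: "free_ultrafilter U \<Longrightarrow> A \<in> U \<Longrightarrow> A \<subseteq> B \<Longrightarrow> B \<in> U"
  unfolding free_ultrafilter_def by (elim conjE allE[of _ A] allE[of _ B]) (erule mp, rule conjI)

lemma free_ultrafilter_Int: "free_ultrafilter U \<Longrightarrow> A \<in> U \<Longrightarrow> B \<in> U \<Longrightarrow> A \<inter> B \<in> U"
  unfolding free_ultrafilter_def by (elim conjE allE[of _ A] allE[of _ B]) (erule mp, rule conjI)

lemma free_ultrafilter_compl: "free_ultrafilter U \<Longrightarrow> A \<notin> U \<Longrightarrow> -A \<in> U"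
  unfolding free_ultrafilter_def by (elim conjE allE[of _ A]) (erule disjE, simp)

lemma free_ultrafilter_nonempty:
  assumes "free_ultrafilter U" "A \<in> U"
  obtains i where "i \<in> A"
proof -
  have "{} \<notin> U"
    using assms(1) unfolding free_ultrafilter_def by (elim conjE)
  with assms(2) show thesis
    using that by (metis ex_in_conv)
qed

lemma free_ultrafilter_Un:
  assumes U: "free_ultrafilter U" and "A \<union> B \<in> U"
  shows "A \<in> U \<or> B \<in> U"
proof (rule ccontr)
  assume "\<not> (A \<in> U \<or> B \<in> U)"
  then have "-A \<in> U" "-B \<in> U"
    using free_ultrafilter_compl[OF U] by blast+
  then have "(A \<union> B) \<inter> (-A \<inter> -B) \<in> U"
    using assms free_ultrafilter_Int by blast
  then obtain i where "i \<in> (A \<union> B) \<inter> (-A \<inter> -B)"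
    by (rule free_ultrafilter_nonempty[OF U])
  then show False by blast
qed

lemma nonstandard_notin_finite:
  assumes U: "free_ultrafilter U" and f: "nonstandard U f" and "finite F"
  shows "{i. f i \<notin> F} \<in> U"
  using \<open>finite F\<close>
proof (induction F rule: finite_induct)
  case empty
  then show ?case using free_ultrafilter_UNIV[OF U] by simp
next
  case (insert x F)
  have "{i. f i \<notin> F} \<inter> {i. f i \<noteq> x} \<in> U"
    using insert f free_ultrafilter_Int[OF U] unfolding nonstandard_def by blast
  moreover have "{i. f i \<notin> F} \<inter> {i. f i \<noteq> x} = {i. f i \<notin> insert x F}" by auto
  ultimately show ?case by simp
qed

lemma nonstandard_above_finite:
  assumes U: "free_ultrafilter U" and f: "nonstandard U f" and "finite t"
  shows "{i. \<forall>k\<in>t. k < f i} \<in> U"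
proof -
  obtain m where "t \<subseteq> {..<m}"
    using \<open>finite t\<close> by (auto simp: finite_nat_set_iff_bounded)
  then have "{i. f i \<notin> {..<m}} \<subseteq> {i. \<forall>k\<in>t. k < f i}" by force
  then show ?thesis
    by (rule free_ultrafilter_mono[OF U nonstandard_notin_finite[OF U f finite_lessThan]])
qed

lemma nonstandard_two_values:
  assumes U: "free_ultrafilter U" and f: "nonstandard U f" and "A \<in> U"
  obtains i j where "i \<in> A" "j \<in> A" "f i \<noteq> f j"
proof -
  obtain i where i: "i \<in> A"
    using free_ultrafilter_nonempty[OF U \<open>A \<in> U\<close>] .
  have "A \<inter> {j. f j \<noteq> f i} \<in> U"
    using free_ultrafilter_Int[OF U \<open>A \<in> U\<close>] f unfolding nonstandard_def by blast
  then obtain j where "j \<in> A \<inter> {j. f j \<noteq> f i}"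
    by (rule free_ultrafilter_nonempty[OF U])
  with i show thesis
    using that by auto
qed

lemma stem_eqI:
  assumes "is_stem T s"
  shows "stem T = s"
  unfolding stem_def
proof (rule the_equality)
  fix s' assume s': "is_stem T s'"
  then have "s \<sqsubseteq> s' \<or> s' \<sqsubseteq> s"
    using assms unfolding is_stem_def comparable_all_def by blast
  with assms s' show "s' = s"
    unfolding is_stem_def by blast
qed (rule assms)

lemma alpha_tree_is_stem: "alpha_tree U a T \<Longrightarrow> is_stem T (stem T)"
  unfolding alpha_tree_def using stem_eqI by metis

lemma alpha_tree_is_tree: "alpha_tree U a T \<Longrightarrow> is_tree T"
  unfolding alpha_tree_def by blast

lemma alpha_tree_finite: "alpha_tree U a T \<Longrightarrow> t \<in> T \<Longrightarrow> finite t"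
  unfolding alpha_tree_def is_tree_def by blast

lemma alpha_tree_stem_mem: "alpha_tree U a T \<Longrightarrow> stem T \<in> T"
  using alpha_tree_is_stem unfolding is_stem_def by blast

lemma alpha_tree_comparable_stem:
  "alpha_tree U a T \<Longrightarrow> t \<in> T \<Longrightarrow> stem T \<sqsubseteq> t \<or> t \<sqsubseteq> stem T"
  using alpha_tree_is_stem unfolding is_stem_def comparable_all_def by blast

lemma alpha_tree_successors:
  assumes U: "free_ultrafilter U" and ns: "\<And>s. finite s \<Longrightarrow> nonstandard U (a s)"
    and T: "alpha_tree U a T" and "t \<in> T" "stem T \<sqsubseteq> t"
  shows "{i. insert (a t i) t \<in> T \<and> (\<forall>k\<in>t. k < a t i)} \<in> U"
proof -
  have "finite t"
    using alpha_tree_finite[OF T \<open>t \<in> T\<close>] .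
  have "{i. insert (a t i) t \<in> T} \<in> U"
    using T assms(4,5) unfolding alpha_tree_def restr_def ext_in_star_def by blast
  from free_ultrafilter_Int[OF U this nonstandard_above_finite[OF U ns[OF \<open>finite t\<close>] \<open>finite t\<close>]]
  show ?thesis by (simp add: Collect_conj_eq)
qed

lemma is_stem_if_two_successors:
  assumes fin: "\<forall>u\<in>T. finite u" and s: "s \<in> T" "comparable_all T s"
    and n: "insert n s \<in> T" "\<forall>k\<in>s. k < n" and m: "insert m s \<in> T" "\<forall>k\<in>s. k < m"
    and "n \<noteq> m"
  shows "is_stem T s"
  unfolding is_stem_def
proof (intro conjI ballI impI)
  show "s \<in> T" "comparable_all T s" using s by auto
  fix s' assume s': "s' \<in> T" "comparable_all T s' \<and> s \<sqsubseteq> s'"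
  have "finite s" "finite s'" using fin s s' by auto
  show "s' = s"
  proof (rule ccontr)
    assume "s' \<noteq> s"
    have above: "insert x s \<sqsubseteq> s'" if "insert x s \<in> T" "\<forall>k\<in>s. k < x" for x
    proof -
      have "s' \<sqsubseteq> insert x s \<or> insert x s \<sqsubseteq> s'"
        using s' that unfolding comparable_all_def by blast
      moreover have "s' \<sqsubseteq> insert x s \<Longrightarrow> s' = insert x s"
        using init_seg_insertE[of s' x s] init_seg_antisym \<open>finite s\<close> that s' \<open>s' \<noteq> s\<close> by blast
      ultimately show ?thesis
        using init_seg_refl \<open>finite s'\<close> by auto
    qed
    have "n = m"
      by (rule init_seg_insert_unique[OF \<open>finite s\<close> n(2) m(2) above[OF n] above[OF m]])
    with \<open>n \<noteq> m\<close> show False ..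
  qed
qed

lemma alpha_treeI:
  assumes U: "free_ultrafilter U" and ns: "\<And>s. finite s \<Longrightarrow> nonstandard U (a s)"
    and S: "is_tree S" and s: "s \<in> S" "comparable_all S s"
    and ext: "\<And>t. t \<in> S \<Longrightarrow> s \<sqsubseteq> t \<Longrightarrow> ext_in_star U t (a t) S"
  shows "alpha_tree U a S" and "stem S = s"
proof -
  have fin: "\<forall>u\<in>S. finite u"
    using S unfolding is_tree_def by blast
  then have "finite s" using s by blast
  have "{i. insert (a s i) s \<in> S} \<inter> {i. \<forall>k\<in>s. k < a s i} \<in> U"
    using ext[OF s(1) init_seg_refl[OF \<open>finite s\<close>]]
      nonstandard_above_finite[OF U ns[OF \<open>finite s\<close>] \<open>finite s\<close>]
    unfolding ext_in_star_def by (rule free_ultrafilter_Int[OF U])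
  then obtain i j where "i \<in> {i. insert (a s i) s \<in> S} \<inter> {i. \<forall>k\<in>s. k < a s i}"
    and "j \<in> {i. insert (a s i) s \<in> S} \<inter> {i. \<forall>k\<in>s. k < a s i}" and "a s i \<noteq> a s j"
    by (rule nonstandard_two_values[OF U ns[OF \<open>finite s\<close>]])
  then have "is_stem S s"
    using is_stem_if_two_successors[OF fin s] by blast
  then show "stem S = s"
    by (rule stem_eqI)
  show "alpha_tree U a S"
    unfolding alpha_tree_def \<open>stem S = s\<close>
    using S \<open>is_stem S s\<close> s(1) init_seg_refl[OF \<open>finite s\<close>] ext unfolding restr_def by blast
qed

lemma alpha_subtree_stem:
  assumes U: "free_ultrafilter U" and ns: "\<And>s. finite s \<Longrightarrow> nonstandard U (a s)"
    and T: "alpha_tree U a T" and S: "alpha_tree U a S" "S \<subseteq> T"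
  shows "stem T \<sqsubseteq> stem S"
proof (rule ccontr)
  define s where "s = stem S"
  assume "\<not> stem T \<sqsubseteq> s"
  have "s \<in> S"
    unfolding s_def by (rule alpha_tree_stem_mem[OF S(1)])
  have "finite s" "finite (stem T)"
    using alpha_tree_finite[OF S(1) \<open>s \<in> S\<close>] alpha_tree_finite[OF T alpha_tree_stem_mem[OF T]] .
  have "{i. insert (a s i) s \<in> S \<and> (\<forall>k\<in>s. k < a s i)} \<in> U"
    using alpha_tree_successors[OF U ns S(1) \<open>s \<in> S\<close>] init_seg_refl[OF \<open>finite s\<close>]
    unfolding s_def by blast
  from free_ultrafilter_Int[OF U this nonstandard_notin_finite[OF U ns[OF \<open>finite s\<close>] \<open>finite (stem T)\<close>]]
  obtain i where i: "insert (a s i) s \<in> S" "\<forall>k\<in>s. k < a s i" "a s i \<notin> stem T"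
    by (rule free_ultrafilter_nonempty[OF U]) blast
  have "stem T \<sqsubseteq> insert (a s i) s \<or> insert (a s i) s \<sqsubseteq> stem T"
    using alpha_tree_comparable_stem[OF T] S(2) i(1) by blast
  then show False
  proof
    assume "stem T \<sqsubseteq> insert (a s i) s"
    then have "stem T \<sqsubseteq> s \<or> stem T = insert (a s i) s"
      using init_seg_insertE \<open>finite s\<close> i(2) by blast
    with \<open>\<not> stem T \<sqsubseteq> s\<close> i(3) show False by blast
  next
    assume "insert (a s i) s \<sqsubseteq> stem T"
    with i(3) show False
      using init_seg_subset by blast
  qed
qed

definition amalgam :: "nat set \<Rightarrow> nat set \<Rightarrow> (nat \<Rightarrow> nat set set) \<Rightarrow> nat set set" where
  "amalgam t N W = {u. u \<sqsubseteq> t} \<union> (\<Union>n\<in>N. W n)"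

locale amalgamation =
  fixes U :: "nat set set" and a :: "nat set \<Rightarrow> nat \<Rightarrow> nat"
    and t :: "nat set" and N :: "nat set" and W :: "nat \<Rightarrow> nat set set"
  assumes ultrafilter: "free_ultrafilter U"
    and nonstandard: "\<And>s. finite s \<Longrightarrow> nonstandard U (a s)"
    and finite_root: "finite t"
    and above_root: "\<And>n. n \<in> N \<Longrightarrow> \<forall>k\<in>t. k < n"
    and alpha_tree_part: "\<And>n. n \<in> N \<Longrightarrow> alpha_tree U a (W n)"
    and stem_part: "\<And>n. n \<in> N \<Longrightarrow> stem (W n) = insert n t"
    and large_index_set: "{i. a t i \<in> N} \<in> U"
begin

lemma part_cases: "n \<in> N \<Longrightarrow> u \<in> W n \<Longrightarrow> u \<sqsubseteq> t \<or> insert n t \<sqsubseteq> u"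
  using alpha_tree_comparable_stem[OF alpha_tree_part] stem_part
    init_seg_insertE[OF _ finite_root above_root] by metis

lemma part_is_tree: "n \<in> N \<Longrightarrow> is_tree (W n)"
  by (rule alpha_tree_is_tree[OF alpha_tree_part])

lemma stem_part_mem: "n \<in> N \<Longrightarrow> insert n t \<in> amalgam t N W"
  using alpha_tree_stem_mem[OF alpha_tree_part] stem_part unfolding amalgam_def by fastforce

lemma is_tree_amalgam: "is_tree (amalgam t N W)"
  unfolding is_tree_def
proof (intro conjI allI impI ballI)
  show "amalgam t N W \<noteq> {}"
    using init_seg_refl[OF finite_root] unfolding amalgam_def by blast
  fix u assume "u \<in> amalgam t N W"
  then show "finite u"
    using init_seg_finite part_is_tree unfolding amalgam_def is_tree_def by blast
next
  fix v u assume vu: "v \<sqsubseteq> u \<and> u \<in> amalgam t N W"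
  then consider "u \<sqsubseteq> t" | n where "n \<in> N" "u \<in> W n"
    unfolding amalgam_def by blast
  then show "v \<in> amalgam t N W"
  proof cases
    case 1
    with vu show ?thesis
      using init_seg_trans unfolding amalgam_def by blast
  next
    case 2
    with vu show ?thesis
      using part_is_tree unfolding amalgam_def is_tree_def by blast
  qed
qed

lemma comparable_amalgam_root: "comparable_all (amalgam t N W) t"
  unfolding comparable_all_def
proof
  fix u assume "u \<in> amalgam t N W"
  then show "t \<sqsubseteq> u \<or> u \<sqsubseteq> t"
    unfolding amalgam_def
    using part_cases init_seg_trans init_seg_insert[OF finite_root above_root] by blast
qed

lemma ext_amalgam:
  assumes s: "s \<in> amalgam t N W" "t \<sqsubseteq> s"
  shows "ext_in_star U s (a s) (amalgam t N W)"
proof (cases "s \<sqsubseteq> t")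
  case True
  then have "s = t"
    using s(2) init_seg_antisym by blast
  have "{i. a t i \<in> N} \<subseteq> {i. insert (a t i) t \<in> amalgam t N W}"
    using stem_part_mem by blast
  then show ?thesis
    unfolding ext_in_star_def \<open>s = t\<close> by (rule free_ultrafilter_mono[OF ultrafilter large_index_set])
next
  case False
  then obtain n where n: "n \<in> N" "s \<in> W n"
    using s(1) unfolding amalgam_def by blast
  with False have "stem (W n) \<sqsubseteq> s"
    using part_cases stem_part by auto
  then have "ext_in_star U s (a s) (W n)"
    using alpha_tree_part[OF n(1)] n(2) unfolding alpha_tree_def restr_def by blast
  then show ?thesis
    unfolding ext_in_star_def
    by (rule free_ultrafilter_mono[OF ultrafilter]) (use n in \<open>auto simp: amalgam_def\<close>)
qed

lemma alpha_tree_amalgam: "alpha_tree U a (amalgam t N W)"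
  and stem_amalgam: "stem (amalgam t N W) = t"
proof -
  have "t \<in> amalgam t N W"
    using init_seg_refl[OF finite_root] unfolding amalgam_def by blast
  note amalgam_alpha_treeI =
    alpha_treeI[of U a, OF ultrafilter _ is_tree_amalgam this comparable_amalgam_root]
  show "alpha_tree U a (amalgam t N W)"
    by (rule amalgam_alpha_treeI(1)) (simp_all add: nonstandard ext_amalgam)
  show "stem (amalgam t N W) = t"
    by (rule amalgam_alpha_treeI(2)) (simp_all add: nonstandard ext_amalgam)
qed

lemma body_amalgam:
  assumes "X \<in> body (amalgam t N W)"
  obtains n where "n \<in> N" "X \<in> body (W n)"
proof -
  have "infinite X" and segs: "\<And>s. s \<sqsubseteq> X \<Longrightarrow> s \<in> amalgam t N W"
    using assms unfolding body_def by auto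
  obtain v where v: "v \<sqsubseteq> X" "\<not> v \<sqsubseteq> t"
    using infinite_init_seg_not_init_seg[OF \<open>infinite X\<close> finite_root] .
  have upper_part: "\<exists>n\<in>N. w \<in> W n \<and> insert n t \<sqsubseteq> w" if "w \<sqsubseteq> X" "\<not> w \<sqsubseteq> t" for w
    using segs[OF that(1)] that(2) part_cases unfolding amalgam_def by blast
  obtain n where n: "n \<in> N" "v \<in> W n" "insert n t \<sqsubseteq> v"
    using upper_part[OF v] by blast
  have "X \<in> body (W n)"
    unfolding body_def
  proof (intro CollectI conjI allI impI)
    fix w assume w: "w \<sqsubseteq> X"
    then consider "w \<sqsubseteq> v" | "v \<sqsubseteq> w"
      using init_seg_linear v(1) by blast
    then show "w \<in> W n"
    proof cases
      case 1
      then show ?thesis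
        using part_is_tree[OF n(1)] n(2) unfolding is_tree_def by blast
    next
      case 2
      then have "\<not> w \<sqsubseteq> t"
        using v(2) init_seg_trans by blast
      then obtain m where m: "m \<in> N" "w \<in> W m" "insert m t \<sqsubseteq> w"
        using upper_part[OF w] by blast
      have "n = m"
        using init_seg_insert_unique[OF finite_root above_root[OF n(1)] above_root[OF m(1)]
            init_seg_trans[OF n(3) 2] m(3)] .
      with m show ?thesis by simp
    qed
  qed (rule \<open>infinite X\<close>)
  with n(1) show thesis ..
qed

end

definition has_alpha_subtree ::
    "nat set set \<Rightarrow> (nat set \<Rightarrow> nat \<Rightarrow> nat) \<Rightarrow> nat set set \<Rightarrow> nat set \<Rightarrow> nat set set \<Rightarrow> bool" where
  "has_alpha_subtree U a T s Y \<longleftrightarrow> (\<exists>S. alpha_tree U a S \<and> S \<subseteq> T \<and> stem S = s \<and> body S \<subseteq> Y)"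

lemma has_alpha_subtree_if_successors:
  assumes U: "free_ultrafilter U" and ns: "\<And>s. finite s \<Longrightarrow> nonstandard U (a s)"
    and T: "is_tree T" "t \<in> T"
    and successors: "{i. has_alpha_subtree U a T (insert (a t i) t) Y} \<in> U"
  shows "has_alpha_subtree U a T t Y"
proof -
  have "finite t"
    using T unfolding is_tree_def by blast
  define N where "N = {n. (\<forall>k\<in>t. k < n) \<and> has_alpha_subtree U a T (insert n t) Y}"
  define W where "W n = (SOME S. alpha_tree U a S \<and> S \<subseteq> T \<and> stem S = insert n t \<and> body S \<subseteq> Y)"
    for n
  have W: "alpha_tree U a (W n) \<and> W n \<subseteq> T \<and> stem (W n) = insert n t \<and> body (W n) \<subseteq> Y"
    if "n \<in> N" for n
    unfolding W_def by (rule someI_ex) (use that in \<open>simp add: N_def has_alpha_subtree_def\<close>)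
  have "{i. \<forall>k\<in>t. k < a t i} \<inter> {i. has_alpha_subtree U a T (insert (a t i) t) Y} \<in> U"
    by (rule free_ultrafilter_Int[OF U nonstandard_above_finite[OF U ns[OF \<open>finite t\<close>] \<open>finite t\<close>]
          successors])
  then have "{i. a t i \<in> N} \<in> U"
    by (rule free_ultrafilter_mono[OF U]) (auto simp: N_def)
  then interpret amalgamation U a t N W
    using U ns \<open>finite t\<close> W by unfold_locales (auto simp: N_def)
  have "amalgam t N W \<subseteq> T"
    using T W unfolding amalgam_def is_tree_def by blast
  moreover have "body (amalgam t N W) \<subseteq> Y"
  proof
    fix X assume "X \<in> body (amalgam t N W)"
    then obtain n where "n \<in> N" "X \<in> body (W n)"
      by (rule body_amalgam)
    with W show "X \<in> Y" by blast
  qed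
  ultimately show ?thesis
    unfolding has_alpha_subtree_def using alpha_tree_amalgam stem_amalgam by blast
qed

definition prune :: "nat set set \<Rightarrow> nat set \<Rightarrow> (nat set \<Rightarrow> bool) \<Rightarrow> nat set set" where
  "prune T s P = {t\<in>T. t \<sqsubseteq> s \<or> (s \<sqsubseteq> t \<and> (\<forall>u. s \<sqsubseteq> u \<and> u \<sqsubseteq> t \<longrightarrow> P u))}"

lemma prune_subset: "prune T s P \<subseteq> T"
  unfolding prune_def by blast

lemma prune_property:
  assumes "P s" "t \<in> prune T s P" "s \<sqsubseteq> u" "u \<sqsubseteq> t"
  shows "P u"
proof -
  have "t \<sqsubseteq> s \<or> (\<forall>u. s \<sqsubseteq> u \<and> u \<sqsubseteq> t \<longrightarrow> P u)"
    using assms(2) unfolding prune_def by blast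
  then show ?thesis
  proof
    assume "t \<sqsubseteq> s"
    then have "u = s"
      using assms(3,4) init_seg_trans init_seg_antisym by blast
    with assms(1) show ?thesis by simp
  qed (use assms(3,4) in blast)
qed

lemma is_tree_prune:
  assumes T: "is_tree T" and "s \<in> T"
  shows "is_tree (prune T s P)"
  unfolding is_tree_def
proof (intro conjI allI impI ballI)
  have "finite s"
    using T \<open>s \<in> T\<close> unfolding is_tree_def by blast
  then show "prune T s P \<noteq> {}"
    using \<open>s \<in> T\<close> init_seg_refl unfolding prune_def by blast
  show "finite t" if "t \<in> prune T s P" for t
    using that T unfolding prune_def is_tree_def by blast
next
  fix v t assume vt: "v \<sqsubseteq> t \<and> t \<in> prune T s P"
  then have "v \<in> T"
    using T unfolding prune_def is_tree_def by blast
  have "t \<sqsubseteq> s \<or> (s \<sqsubseteq> t \<and> (\<forall>u. s \<sqsubseteq> u \<and> u \<sqsubseteq> t \<longrightarrow> P u))"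
    using vt unfolding prune_def by blast
  moreover have "v \<sqsubseteq> s \<or> s \<sqsubseteq> v" if "s \<sqsubseteq> t"
    using init_seg_linear vt that by blast
  ultimately show "v \<in> prune T s P"
    using \<open>v \<in> T\<close> vt init_seg_trans unfolding prune_def by blast
qed

lemma alpha_tree_prune:
  assumes U: "free_ultrafilter U" and ns: "\<And>s. finite s \<Longrightarrow> nonstandard U (a s)"
    and T: "alpha_tree U a T" and "P (stem T)"
    and successors: "\<And>t. t \<in> T \<Longrightarrow> stem T \<sqsubseteq> t \<Longrightarrow> P t \<Longrightarrow> {i. P (insert (a t i) t)} \<in> U"
  shows "alpha_tree U a (prune T (stem T) P)" and "stem (prune T (stem T) P) = stem T"
proof -
  define s where "s = stem T"
  have "s \<in> T" "finite s"
    unfolding s_def using alpha_tree_stem_mem[OF T] alpha_tree_finite[OF T] by auto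
  then have s_mem: "s \<in> prune T s P"
    using init_seg_refl unfolding prune_def by blast
  have comparable: "comparable_all (prune T s P) s"
    using alpha_tree_comparable_stem[OF T] prune_subset unfolding s_def comparable_all_def by blast
  have ext: "ext_in_star U t (a t) (prune T s P)" if t: "t \<in> prune T s P" "s \<sqsubseteq> t" for t
  proof -
    have "t \<in> T"
      using t(1) prune_subset by blast
    then have "finite t"
      by (rule alpha_tree_finite[OF T])
    have "P t"
      using prune_property[OF \<open>P (stem T)\<close>[folded s_def] t init_seg_refl[OF \<open>finite t\<close>]] .
    have "{i. insert (a t i) t \<in> T \<and> (\<forall>k\<in>t. k < a t i)} \<inter> {i. P (insert (a t i) t)} \<in> U"
      using free_ultrafilter_Int[OF U alpha_tree_successors[OF U ns T \<open>t \<in> T\<close>]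
          successors[OF \<open>t \<in> T\<close> _ \<open>P t\<close>]] t(2) unfolding s_def by blast
    then show ?thesis
      unfolding ext_in_star_def
    proof (rule free_ultrafilter_mono[OF U], safe)
      fix i assume i: "insert (a t i) t \<in> T" "\<forall>k\<in>t. k < a t i" "P (insert (a t i) t)"
      have "P u" if "s \<sqsubseteq> u" "u \<sqsubseteq> insert (a t i) t" for u
        using init_seg_insertE[OF that(2) \<open>finite t\<close> i(2)] prune_property[OF \<open>P (stem T)\<close>[folded s_def] t(1) that(1)] i(3)
        by blast
      moreover have "s \<sqsubseteq> insert (a t i) t"
        using init_seg_trans[OF t(2) init_seg_insert[OF \<open>finite t\<close> i(2)]] .
      ultimately show "insert (a t i) t \<in> prune T s P"
        using i(1) unfolding prune_def by blast
    qed
  qed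
  note prune_alpha_treeI =
    alpha_treeI[of U a, OF U _ is_tree_prune[OF alpha_tree_is_tree[OF T] \<open>s \<in> T\<close>] s_mem comparable]
  show "alpha_tree U a (prune T (stem T) P)"
    unfolding s_def[symmetric] by (rule prune_alpha_treeI(1)) (simp_all add: ns ext)
  show "stem (prune T (stem T) P) = stem T"
    unfolding s_def[symmetric] by (rule prune_alpha_treeI(2)) (simp_all add: ns ext)
qed

lemma prune_alpha_subtree_stem:
  assumes U: "free_ultrafilter U" and ns: "\<And>s. finite s \<Longrightarrow> nonstandard U (a s)"
    and T: "alpha_tree U a T" and "P (stem T)"
    and S: "alpha_tree U a S" "S \<subseteq> prune T (stem T) P"
  shows "P (stem S)"
proof -
  have "stem S \<in> prune T (stem T) P"
    using alpha_tree_stem_mem[OF S(1)] S(2) by blast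
  moreover have "stem T \<sqsubseteq> stem S"
    using alpha_subtree_stem[OF U ns T S(1)] S(2) prune_subset by blast
  moreover have "finite (stem S)"
    using alpha_tree_finite[OF S(1) alpha_tree_stem_mem[OF S(1)]] .
  ultimately show ?thesis
    using prune_property[where P = P, OF \<open>P (stem T)\<close>] init_seg_refl by blast
qed

definition undecided ::
    "nat set set \<Rightarrow> (nat set \<Rightarrow> nat \<Rightarrow> nat) \<Rightarrow> nat set set \<Rightarrow> nat set set \<Rightarrow> nat set \<Rightarrow> bool" where
  "undecided U a T \<X> s \<longleftrightarrow> \<not> has_alpha_subtree U a T s \<X> \<and> \<not> has_alpha_subtree U a T s (- \<X>)"

lemma undecided_successors:
  assumes U: "free_ultrafilter U" and ns: "\<And>s. finite s \<Longrightarrow> nonstandard U (a s)"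
    and T: "is_tree T" "t \<in> T" and "undecided U a T \<X> t"
  shows "{i. undecided U a T \<X> (insert (a t i) t)} \<in> U"
proof (rule ccontr)
  assume "{i. undecided U a T \<X> (insert (a t i) t)} \<notin> U"
  then have "- {i. undecided U a T \<X> (insert (a t i) t)} \<in> U"
    by (rule free_ultrafilter_compl[OF U])
  also have "- {i. undecided U a T \<X> (insert (a t i) t)} =
      {i. has_alpha_subtree U a T (insert (a t i) t) \<X>}
      \<union> {i. has_alpha_subtree U a T (insert (a t i) t) (- \<X>)}"
    unfolding undecided_def by blast
  finally consider
      "{i. has_alpha_subtree U a T (insert (a t i) t) \<X>} \<in> U"
    | "{i. has_alpha_subtree U a T (insert (a t i) t) (- \<X>)} \<in> U"
    using free_ultrafilter_Un[OF U] by blast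
  then show False
    using has_alpha_subtree_if_successors[OF U ns T] \<open>undecided U a T \<X> t\<close>
    unfolding undecided_def by cases simp_all
qed

theorem mainTheorem1:
  fixes U :: "nat set set" and a :: "nat set \<Rightarrow> nat \<Rightarrow> nat"
    and \<X> :: "nat set set" and T :: "nat set set"
  assumes "free_ultrafilter U"
    and "\<And>s. finite s \<Longrightarrow> nonstandard U (a s)"
    and "\<X> \<subseteq> {X. infinite X}"
    and "alpha_tree U a T"
  shows "\<exists>S. alpha_tree U a S \<and> S \<subseteq> T \<and> stem S = stem T \<and>
           (body S \<subseteq> \<X> \<or> body S \<inter> \<X> = {} \<or>
            (\<forall>S'. alpha_tree U a S' \<and> S' \<subseteq> S \<longrightarrow>
                  \<not> body S' \<subseteq> \<X> \<and> body S' \<inter> \<X> \<noteq> {}))"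
proof (cases "undecided U a T \<X> (stem T)")
  case False
  then show ?thesis
    unfolding undecided_def has_alpha_subtree_def by (metis Int_empty_left Int_commute disjoint_eq_subset_Compl)
next
  case True
  note U = assms(1) and ns = assms(2) and T = assms(4)
  define S where "S = prune T (stem T) (undecided U a T \<X>)"
  have successors: "{i. undecided U a T \<X> (insert (a t i) t)} \<in> U"
    if "t \<in> T" "undecided U a T \<X> t" for t
    using undecided_successors[OF U ns alpha_tree_is_tree[OF T] that] .
  have S: "alpha_tree U a S" "stem S = stem T"
    unfolding S_def using alpha_tree_prune[of U a, OF U ns T True successors] by blast+
  have "\<not> body S' \<subseteq> \<X> \<and> body S' \<inter> \<X> \<noteq> {}" if S': "alpha_tree U a S'" "S' \<subseteq> S" for S'
  proof -
    have "undecided U a T \<X> (stem S')"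
      using prune_alpha_subtree_stem[OF U ns T True S'[unfolded S_def]] .
    moreover have "S' \<subseteq> T"
      using S'(2) prune_subset unfolding S_def by blast
    ultimately show ?thesis
      using S' unfolding undecided_def has_alpha_subtree_def by blast
  qed
  then show ?thesis
    using S prune_subset unfolding S_def by blast
qed

end
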